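(* Let $K\subset\mathbb{R}^n$ ($n\ge2$) be compact and not log-polar, let $\mu\in\mathcal M(K)$ with $I(\mu)<\infty$, and let $Q\in\mathcal A(K)$ be finite $\mu$-almost everywhere. Then there exist an increasing sequence of compact sets $K_m\subset K$ and measures $\mu_m\in\mathcal M(K_m)$ such that: (1) $\mu_m\to\mu$ weakly as $m\to\infty$; (2) $Q|_{K_m}\in C(K_m)$ for each $m$ and $\int Q\,d\mu_m\to\int Q\,d\mu$; (3) $I(\mu_m)\to I(\mu)$.
   Context: $\mathcal M(K)$: Borel probability measures on $K$, weak topology. $I(\mu)=\int\int\log\frac1{|x-y|}d\mu d\mu$; $K$ log-polar if $I=\infty$ on $\mathcal M(K)$ (a Borel set if all compact subsets are). $\mathcal A(K)$: lower semicontinuous $Q:K\to(-\infty,\infty]$ with $\{Q<\infty\}$ not log-polar. *)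

theory Defs
  imports "HOL-Probability.Probability"
begin

definition prob_measures_on :: "'a::euclidean_space set \<Rightarrow> 'a measure set" where
  "prob_measures_on K = {M. prob_space M \<and> sets M = sets borel \<and> emeasure M K = 1}"

definition log_kernel_pos :: "'a::euclidean_space \<Rightarrow> 'a \<Rightarrow> ennreal" where
  "log_kernel_pos x y = (if x = y then \<infinity> else ennreal (max 0 (- ln (dist x y))))"

definition log_kernel_neg :: "'a::euclidean_space \<Rightarrow> 'a \<Rightarrow> ennreal" where
  "log_kernel_neg x y = (if x = y then 0 else ennreal (max 0 (ln (dist x y))))"

definition log_energy :: "'a::euclidean_space measure \<Rightarrow> ereal" where
  "log_energy M =
     enn2ereal (\<integral>\<^sup>+ x. \<integral>\<^sup>+ y. log_kernel_pos x y \<partial>M \<partial>M)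
   - enn2ereal (\<integral>\<^sup>+ x. \<integral>\<^sup>+ y. log_kernel_neg x y \<partial>M \<partial>M)"

definition log_polar :: "'a::euclidean_space set \<Rightarrow> bool" where
  "log_polar E \<longleftrightarrow> (\<forall>C. C \<subseteq> E \<and> compact C \<longrightarrow> (\<forall>M \<in> prob_measures_on C. log_energy M = \<infinity>))"

definition lsc_on :: "'a::metric_space set \<Rightarrow> ('a \<Rightarrow> ereal) \<Rightarrow> bool" where
  "lsc_on K Q \<longleftrightarrow> (\<forall>t. openin (top_of_set K) {x \<in> K. t < Q x})"

definition admissible :: "'a::euclidean_space set \<Rightarrow> ('a \<Rightarrow> ereal) \<Rightarrow> bool" where
  "admissible K Q \<longleftrightarrow> lsc_on K Q \<and> (\<forall>x\<in>K. Q x \<noteq> -\<infinity>) \<and> \<not> log_polar {x \<in> K. Q x < \<infinity>}"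

definition ext_integral :: "'a measure \<Rightarrow> ('a \<Rightarrow> ereal) \<Rightarrow> ereal" where
  "ext_integral M f =
     enn2ereal (\<integral>\<^sup>+ x. e2ennreal (f x) \<partial>M) - enn2ereal (\<integral>\<^sup>+ x. e2ennreal (- f x) \<partial>M)"

definition weak_conv_to :: "(nat \<Rightarrow> 'a::topological_space measure) \<Rightarrow> 'a measure \<Rightarrow> bool" where
  "weak_conv_to Ms M \<longleftrightarrow>
     (\<forall>f :: 'a \<Rightarrow> real. continuous_on UNIV f \<and> bounded (range f) \<longrightarrow>
        (\<lambda>m. integral\<^sup>L (Ms m) f) \<longlonglongrightarrow> integral\<^sup>L M f)"

end

theory Submission
  imports Defs
begin

text \<open>A Lusin-type theorem for lower semicontinuous functions yields compact sets \<open>K\<^sub>m \<subseteq> K\<close>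
  increasing to a set of full \<open>\<mu>\<close>-measure, on each of which \<open>Q\<close> is finite and continuous.
  Take for \<open>\<mu>\<^sub>m\<close> the restriction of \<open>\<mu>\<close> to \<open>K\<^sub>m\<close>, normalized. Every quantity in question
  (integrals of bounded continuous functions, the positive and negative parts of \<open>\<integral>Q\<close> and of
  \<open>I\<close>) is then \<open>\<mu>(K\<^sub>m)\<^sup>-\<^sup>1\<close>, or its square, times the integral of a fixed function over \<open>K\<^sub>m\<close>,
  or over \<open>K\<^sub>m \<times> K\<^sub>m\<close>; these converge by dominated, respectively monotone, convergence, and
  \<open>\<mu>(K\<^sub>m) \<rightarrow> 1\<close>. The negative parts have finite limits because \<open>Q\<close> is bounded below on the
  compact set \<open>K\<close> and \<open>K\<close> is bounded, so the differences converge as well.\<close>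

section \<open>Lower semicontinuous functions\<close>

lemma lsc_on_openin_greater:
  "lsc_on K Q \<Longrightarrow> \<exists>T. open T \<and> {x \<in> K. t < Q x} = K \<inter> T"
  unfolding lsc_on_def openin_open by blast

lemma lsc_on_closed_sublevel:
  assumes "lsc_on K Q" "closed K"
  shows "closed {x \<in> K. Q x \<le> c}"
proof -
  obtain T where T: "open T" "{x \<in> K. c < Q x} = K \<inter> T"
    using lsc_on_openin_greater[OF assms(1)] by blast
  then have "{x \<in> K. Q x \<le> c} = K \<inter> - T"
    by (auto simp: not_less[symmetric])
  then show ?thesis
    using T(1) assms(2) by (simp add: closed_Int open_closed)
qed

lemma lsc_on_borel_measurable:
  fixes Q :: "'a::metric_space \<Rightarrow> ereal"
  assumes "lsc_on K Q" "closed K"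
  shows "(\<lambda>x. if x \<in> K then Q x else 0) \<in> borel_measurable borel"
proof (rule borel_measurableI_greater)
  fix t :: ereal
  obtain T where T: "open T" "{x \<in> K. t < Q x} = K \<inter> T"
    using lsc_on_openin_greater[OF assms(1)] by blast
  have "{x \<in> space borel. t < (if x \<in> K then Q x else 0)} = (K \<inter> T) \<union> (if t < 0 then - K else {})"
    using T(2) by auto
  also have "\<dots> \<in> sets borel"
    using T(1) assms(2) by auto
  finally show "{x \<in> space borel. t < (if x \<in> K then Q x else 0)} \<in> sets borel" .
qed

text \<open>On a compact set, the open sets \<open>{Q > -n}\<close> cover, so finitely many do.\<close>
lemma lsc_on_compact_bounded_below:
  fixes Q :: "'a::metric_space \<Rightarrow> ereal"
  assumes K: "compact K" and lsc: "lsc_on K Q" and ninf: "\<forall>x\<in>K. Q x \<noteq> -\<infinity>"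
  shows "\<exists>b::real. b \<ge> 0 \<and> (\<forall>x\<in>K. - ereal b \<le> Q x)"
proof -
  have "\<forall>n::nat. \<exists>T. open T \<and> {x \<in> K. - ereal (real n) < Q x} = K \<inter> T"
    using lsc_on_openin_greater[OF lsc] by blast
  then obtain T where T: "\<And>n. open (T n)" "\<And>n. {x \<in> K. - ereal (real n) < Q x} = K \<inter> T n"
    by metis
  have "K \<subseteq> (\<Union>n. T n)"
  proof
    fix x assume x: "x \<in> K"
    obtain n :: nat where "- ereal (real n) < Q x"
    proof (cases "Q x")
      case (real v)
      obtain n :: nat where "- v < real n" using reals_Archimedean2 by blast
      then show ?thesis using that[of n] real by simp
    qed (use ninf x that[of 0] in auto)
    then show "x \<in> (\<Union>n. T n)" using x T(2)[of n] by blast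
  qed
  then obtain N where "finite N" and N: "K \<subseteq> (\<Union>n\<in>N. T n)"
    by (rule compactE_image[OF K T(1)]) blast
  then obtain b where b: "\<forall>n\<in>N. n \<le> b"
    using finite_nat_set_iff_bounded_le by blast
  have "- ereal (real b) \<le> Q x" if x: "x \<in> K" for x
  proof -
    obtain n where "n \<in> N" "x \<in> K \<inter> T n" using N x by blast
    then have "- ereal (real n) < Q x" "n \<le> b" using T(2)[of n] b by auto
    then have "- ereal (real b) \<le> - ereal (real n)" by simp
    then show ?thesis using \<open>- ereal (real n) < Q x\<close> by (meson less_imp_le order_trans)
  qed
  then show ?thesis by (intro exI[of _ "real b"]) simp
qed

text \<open>Lower semicontinuity gives the open sets \<open>{Q > a}\<close>; upper semicontinuity on \<open>C\<close> only
  needs to be checked at rational levels, since \<open>{Q < a}\<close> is the union of the \<open>{Q < q}\<close>, \<open>q < a\<close>.\<close>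
lemma continuous_on_if_rational_sublevels_openin:
  fixes Q :: "'a::metric_space \<Rightarrow> ereal"
  assumes lsc: "lsc_on K Q" and "C \<subseteq> K"
    and sub: "\<And>q. q \<in> \<rat> \<Longrightarrow> openin (top_of_set C) {x \<in> C. Q x < ereal q}"
  shows "continuous_on C Q"
proof -
  have "openin (top_of_set C) {x \<in> C. a < Q x}" for a
  proof -
    obtain T where "open T" "{x \<in> K. a < Q x} = K \<inter> T"
      using lsc_on_openin_greater[OF lsc] by blast
    then have "{x \<in> C. a < Q x} = C \<inter> T" using \<open>C \<subseteq> K\<close> by blast
    then show ?thesis using \<open>open T\<close> by (auto simp: openin_open)
  qed
  moreover have "openin (top_of_set C) {x \<in> C. Q x < a}" for a
  proof -
    have eq: "{x \<in> C. Q x < a} = (\<Union>q \<in> {q \<in> \<rat>. ereal q < a}. {x \<in> C. Q x < ereal q})"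
    proof (intro equalityI subsetI)
      fix x assume x: "x \<in> {x \<in> C. Q x < a}"
      then obtain z where z: "Q x < ereal z" "ereal z < a" using ereal_dense2 by blast
      then obtain w where w: "ereal z < ereal w" "ereal w < a" using ereal_dense2 by blast
      then obtain q where q: "q \<in> \<rat>" "z < q" "q < w" using Rats_dense_in_real by auto
      then have "ereal z < ereal q" "ereal q < ereal w" by simp_all
      then have "Q x < ereal q" "ereal q < a"
        using z(1) w(2) by (blast intro: less_trans)+
      then show "x \<in> (\<Union>q \<in> {q \<in> \<rat>. ereal q < a}. {x \<in> C. Q x < ereal q})"
        using x q(1) by blast
    qed (use less_trans in blast)
    show ?thesis
      unfolding eq by (intro openin_Union) (auto intro: sub)
  qed
  ultimately show ?thesis
    using continuous_map_upper_lower_semicontinuous_lt[of "top_of_set C" Q] by simp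
qed

section \<open>A Lusin theorem for lower semicontinuous functions\<close>

lemma finite_measure_compact_inner:
  fixes M :: "'a::polish_space measure"
  assumes sM: "sets M = sets borel" and fm: "finite_measure M"
    and B: "B \<in> sets borel" and e: "e > 0"
  shows "\<exists>F. compact F \<and> F \<subseteq> B \<and> measure M (B - F) < e"
proof -
  interpret finite_measure M by (rule fm)
  have B': "B \<in> sets M" using B sM by simp
  show ?thesis
  proof (cases "measure M B < e")
    case True
    then show ?thesis by (intro exI[of _ "{}"]) auto
  next
    case False
    have "emeasure M B = (SUP K \<in> {K. K \<subseteq> B \<and> compact K}. emeasure M K)"
      by (rule inner_regular[OF sM _ B]) simp
    moreover have "ennreal (measure M B - e) < emeasure M B"
      using False e B' by (simp add: emeasure_eq_measure ennreal_lessI)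
    ultimately obtain F where F: "F \<subseteq> B" "compact F" "ennreal (measure M B - e) < emeasure M F"
      by (auto simp: less_SUP_iff)
    have F': "F \<in> sets M" using F(2) sM by (simp add: borel_compact)
    have "measure M B - e < measure M F"
      using F(3) False by (simp add: emeasure_eq_measure ennreal_less_iff)
    moreover have "measure M (B - F) = measure M B - measure M F"
      using F(1) F' B' by (simp add: finite_measure_Diff)
    ultimately show ?thesis using F by (intro exI[of _ F]) auto
  qed
qed

lemma finite_measure_compact_inner_seq:
  fixes M :: "'a::polish_space measure" and B :: "nat \<Rightarrow> 'a set"
  assumes sM: "sets M = sets borel" and fm: "finite_measure M"
    and B: "\<And>n. B n \<in> sets borel" and e: "e > 0"
  shows "\<exists>F. (\<forall>n. compact (F n) \<and> F n \<subseteq> B n) \<and> measure M (\<Union>n. B n - F n) < e"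
proof -
  interpret finite_measure M by (rule fm)
  define d where "d n = e / 4 * (1 / 2) ^ n" for n :: nat
  have d_sums: "d sums (e / 2)"
    unfolding d_def using sums_mult[OF geometric_sums[of "1 / 2 :: real"], of "e / 4"] by simp
  have "d n > 0" for n
    using e by (simp add: d_def)
  then have "\<forall>n. \<exists>F. compact F \<and> F \<subseteq> B n \<and> measure M (B n - F) < d n"
    using finite_measure_compact_inner[OF sM fm B] by blast
  then obtain F where F: "\<And>n. compact (F n)" "\<And>n. F n \<subseteq> B n" "\<And>n. measure M (B n - F n) < d n"
    by metis
  have sets: "B n - F n \<in> sets M" for n
    using B[of n] borel_compact[OF F(1)[of n]] sM by auto
  have le_d: "measure M (B n - F n) \<le> d n" for n
    using F(3)[of n] by simp
  have summ: "summable (\<lambda>n. measure M (B n - F n))"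
    by (rule summable_comparison_test'[OF sums_summable[OF d_sums]]) (simp add: le_d)
  have "measure M (\<Union>n. B n - F n) \<le> (\<Sum>n. measure M (B n - F n))"
    using sets summ by (intro finite_measure_subadditive_countably) auto
  also have "\<dots> \<le> (\<Sum>n. d n)"
    by (rule suminf_le[OF le_d summ sums_summable[OF d_sums]])
  also have "\<dots> = e / 2"
    using d_sums by (simp add: sums_iff)
  finally show ?thesis
    using F(1,2) e by (intro exI[of _ F]) auto
qed

lemma lsc_on_sublevel_large:
  fixes M :: "'a::metric_space measure"
  assumes sM: "sets M = sets borel" and fm: "finite_measure M" and K: "closed K"
    and lsc: "lsc_on K Q" and fin: "AE x in M. Q x < \<infinity>" and e: "e > 0"
  shows "\<exists>c::real. measure M (K - {x \<in> K. Q x \<le> ereal c}) < e"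
proof -
  interpret finite_measure M by (rule fm)
  define D where "D n = K - {x \<in> K. Q x \<le> ereal (real n)}" for n :: nat
  have D_sets: "D n \<in> sets M" for n
    using lsc_on_closed_sublevel[OF lsc K] K sM by (auto simp: D_def)
  have "decseq D"
  proof (rule decseq_SucI)
    fix n
    have "ereal (real n) \<le> ereal (real (Suc n))" by simp
    then show "D (Suc n) \<subseteq> D n" by (auto simp: D_def intro: order_trans)
  qed
  then have lim: "(\<lambda>n. measure M (D n)) \<longlonglongrightarrow> measure M (\<Inter>n. D n)"
    using D_sets by (intro finite_Lim_measure_decseq) auto
  have "AE x in M. x \<notin> (\<Inter>n. D n)"
    using fin
  proof eventually_elim
    case (elim x)
    then obtain v where "Q x \<le> ereal v" by (cases "Q x") auto
    moreover obtain n :: nat where "v \<le> real n" using real_arch_simple by blast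
    ultimately have "x \<notin> D n" by (auto simp: D_def intro: order_trans)
    then show ?case by blast
  qed
  then have "emeasure M (\<Inter>n. D n) = 0"
    using D_sets by (subst AE_iff_measurable[symmetric, of _ _ "\<lambda>x. x \<notin> (\<Inter>n. D n)"])
      (auto simp: sets.countable_INT sets_eq_imp_space_eq[OF sM])
  then have "(\<lambda>n. measure M (D n)) \<longlonglongrightarrow> 0"
    using lim by (simp add: emeasure_eq_measure)
  then have "eventually (\<lambda>n. measure M (D n) < e) sequentially"
    using e by (rule order_tendstoD(2))
  then obtain n where "measure M (D n) < e"
    by (auto dest: eventually_happens)
  then show ?thesis by (auto simp: D_def)
qed

text \<open>Cover \<open>K\<close> up to small measure by \<open>F\<^sub>q \<union> H\<^sub>q\<close> for every rational \<open>q\<close>, where \<open>F\<^sub>q \<subseteq> {Q < q}\<close>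
  and \<open>H\<^sub>q \<subseteq> {Q \<ge> q}\<close> are compact; then \<open>{x \<in> C. Q x < q} = C - H\<^sub>q\<close>.\<close>
lemma lsc_on_large_compact_rational_sublevels_openin:
  fixes M :: "'a::polish_space measure" and Q :: "'a \<Rightarrow> ereal"
  assumes sM: "sets M = sets borel" and fm: "finite_measure M" and K: "closed K"
    and lsc: "lsc_on K Q" and e: "e > 0"
  shows "\<exists>C. compact C \<and> C \<subseteq> K \<and> measure M (K - C) < e
             \<and> (\<forall>q\<in>\<rat>. openin (top_of_set C) {x \<in> C. Q x < ereal q})"
proof -
  interpret finite_measure M by (rule fm)
  have [measurable]: "K \<in> sets borel" "(\<lambda>x. if x \<in> K then Q x else 0) \<in> borel_measurable borel"
    using K lsc by (auto intro: lsc_on_borel_measurable)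
  define r where "r = from_nat_into (\<rat> :: real set)"
  have range_r: "range r = \<rat>"
    unfolding r_def by (rule range_from_nat_into) (auto simp: countable_rat)
  define A where "A n = {x \<in> K. Q x < ereal (r n)}" for n
  define G where "G n = {x \<in> K. ereal (r n) \<le> Q x}" for n
  have "A n = K \<inter> {x. (if x \<in> K then Q x else 0) < ereal (r n)}"
       "G n = K \<inter> {x. ereal (r n) \<le> (if x \<in> K then Q x else 0)}" for n
    by (auto simp: A_def G_def)
  then have A_sets [measurable]: "A n \<in> sets borel" and G_sets [measurable]: "G n \<in> sets borel" for n
    by (simp_all only:) measurable
  obtain F where F: "\<And>n. compact (F n)" "\<And>n. F n \<subseteq> A n" "measure M (\<Union>n. A n - F n) < e / 2"
    using finite_measure_compact_inner_seq[OF sM fm, of A "e / 2"] A_sets e by auto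
  obtain H where H: "\<And>n. compact (H n)" "\<And>n. H n \<subseteq> G n" "measure M (\<Union>n. G n - H n) < e / 2"
    using finite_measure_compact_inner_seq[OF sM fm, of G "e / 2"] G_sets e by auto
  define C where "C = (\<Inter>n. F n \<union> H n)"
  have "closed C"
    unfolding C_def using F(1) H(1) by (intro closed_INT) (simp add: compact_imp_closed compact_Un)
  moreover have "(F 0 \<union> H 0) \<inter> C = C"
    by (auto simp: C_def)
  ultimately have "compact C"
    using compact_Int_closed[OF compact_Un[OF F(1)[of 0] H(1)[of 0]], of C] by simp
  have "C \<subseteq> K"
    using F(2)[of 0] H(2)[of 0] by (auto simp: C_def A_def G_def)
  have "K - C \<subseteq> (\<Union>n. A n - F n) \<union> (\<Union>n. G n - H n)"
  proof
    fix x assume x: "x \<in> K - C"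
    then obtain n where "x \<notin> F n" "x \<notin> H n" by (auto simp: C_def)
    moreover have "x \<in> A n \<or> x \<in> G n" using x by (auto simp: A_def G_def not_less)
    ultimately show "x \<in> (\<Union>n. A n - F n) \<union> (\<Union>n. G n - H n)" by blast
  qed
  moreover have [measurable]: "F n \<in> sets borel" "H n \<in> sets borel" for n
    using F(1) H(1) by (auto intro: borel_compact)
  then have sets: "(\<Union>n. A n - F n) \<in> sets M" "(\<Union>n. G n - H n) \<in> sets M"
    unfolding sM by measurable
  ultimately have "measure M (K - C) \<le> measure M ((\<Union>n. A n - F n) \<union> (\<Union>n. G n - H n))"
    by (intro finite_measure_mono) auto
  also have "\<dots> \<le> measure M (\<Union>n. A n - F n) + measure M (\<Union>n. G n - H n)"
    using sets by (intro measure_Un_le)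
  finally have "measure M (K - C) < e"
    using F(3) H(3) by simp
  moreover have "openin (top_of_set C) {x \<in> C. Q x < ereal q}" if "q \<in> \<rat>" for q
  proof -
    from \<open>q \<in> \<rat>\<close> obtain n where q: "q = r n"
      unfolding range_r[symmetric] by blast
    have "{x \<in> C. Q x < ereal q} = C \<inter> - H n"
      using F(2)[of n] H(2)[of n] by (auto simp: q C_def A_def G_def not_le)
    moreover have "open (- H n)"
      using H(1) by (simp add: compact_imp_closed open_Compl)
    ultimately show ?thesis
      by (simp add: openin_open_Int)
  qed
  ultimately show ?thesis
    using \<open>compact C\<close> \<open>C \<subseteq> K\<close> by (intro exI[of _ C]) simp
qed

text \<open>Intersecting with a sublevel set \<open>{Q \<le> c}\<close> makes \<open>Q\<close> finite.\<close>
lemma lsc_on_lusin: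
  fixes M :: "'a::polish_space measure" and Q :: "'a \<Rightarrow> ereal"
  assumes sM: "sets M = sets borel" and fm: "finite_measure M" and K: "compact K"
    and lsc: "lsc_on K Q" and ninf: "\<forall>x\<in>K. Q x \<noteq> -\<infinity>"
    and fin: "AE x in M. Q x < \<infinity>" and e: "e > 0"
  shows "\<exists>C. compact C \<and> C \<subseteq> K \<and> measure M (K - C) < e \<and> continuous_on C Q
             \<and> (\<forall>x\<in>C. \<bar>Q x\<bar> \<noteq> \<infinity>)"
proof -
  interpret finite_measure M by (rule fm)
  obtain c where c: "measure M (K - {x \<in> K. Q x \<le> ereal c}) < e / 2"
    using lsc_on_sublevel_large[OF sM fm compact_imp_closed[OF K] lsc fin, of "e / 2"] e by auto
  obtain C where C: "compact C" "C \<subseteq> K" "measure M (K - C) < e / 2"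
    and C_open: "\<forall>q\<in>\<rat>. openin (top_of_set C) {x \<in> C. Q x < ereal q}"
    using lsc_on_large_compact_rational_sublevels_openin[OF sM fm compact_imp_closed[OF K] lsc, of "e / 2"] e
    by auto
  define L where "L = {x \<in> K. Q x \<le> ereal c}"
  have "closed L"
    unfolding L_def by (rule lsc_on_closed_sublevel[OF lsc compact_imp_closed[OF K]])
  then have "compact (C \<inter> L)" "C \<inter> L \<subseteq> K"
    using C(1,2) by (auto intro: compact_Int_closed)
  have [measurable]: "K \<in> sets M" "C \<in> sets M" "L \<in> sets M"
    using K C(1) \<open>closed L\<close> sM by (auto intro: borel_compact)
  have "measure M (K - C \<inter> L) \<le> measure M ((K - L) \<union> (K - C))"
    by (intro finite_measure_mono) auto
  also have "\<dots> \<le> measure M (K - L) + measure M (K - C)"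
    by (intro measure_Un_le) auto
  finally have "measure M (K - C \<inter> L) < e"
    using c C(3) by (simp add: L_def)
  moreover have "openin (top_of_set (C \<inter> L)) {x \<in> C \<inter> L. Q x < ereal q}" if "q \<in> \<rat>" for q
  proof -
    obtain T where "open T" "{x \<in> C. Q x < ereal q} = C \<inter> T"
      using C_open \<open>q \<in> \<rat>\<close> by (auto simp: openin_open)
    then have "{x \<in> C \<inter> L. Q x < ereal q} = (C \<inter> L) \<inter> T" by blast
    then show ?thesis using \<open>open T\<close> by (simp add: openin_open_Int)
  qed
  then have "continuous_on (C \<inter> L) Q"
    by (rule continuous_on_if_rational_sublevels_openin[OF lsc \<open>C \<inter> L \<subseteq> K\<close>])
  moreover have "\<bar>Q x\<bar> \<noteq> \<infinity>" if "x \<in> C \<inter> L" for x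
    using that ninf by (auto simp: L_def)
  ultimately show ?thesis
    using \<open>compact (C \<inter> L)\<close> \<open>C \<inter> L \<subseteq> K\<close> by (intro exI[of _ "C \<inter> L"]) simp
qed

lemma lsc_on_lusin_incseq:
  fixes M :: "'a::polish_space measure" and Q :: "'a \<Rightarrow> ereal"
  assumes sM: "sets M = sets borel" and "prob_space M" and K: "compact K"
    and MK: "AE x in M. x \<in> K" and lsc: "lsc_on K Q" and ninf: "\<forall>x\<in>K. Q x \<noteq> -\<infinity>"
    and fin: "AE x in M. Q x < \<infinity>"
  shows "\<exists>Ks. incseq Ks
           \<and> (\<forall>m. compact (Ks m) \<and> Ks m \<subseteq> K \<and> continuous_on (Ks m) Q \<and> (\<forall>x\<in>Ks m. \<bar>Q x\<bar> \<noteq> \<infinity>)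
                 \<and> measure M (Ks m) > 0)
           \<and> (AE x in M. x \<in> (\<Union>m. Ks m))"
proof -
  interpret prob_space M by fact
  have "\<exists>C. compact C \<and> C \<subseteq> K \<and> measure M (K - C) < (1 / 2) ^ Suc m
                   \<and> continuous_on C Q \<and> (\<forall>x\<in>C. \<bar>Q x\<bar> \<noteq> \<infinity>)" for m :: nat
    by (rule lsc_on_lusin[OF sM finite_measure_axioms K lsc ninf fin]) simp
  then obtain C where C: "\<And>m. compact (C m)" "\<And>m. C m \<subseteq> K" "\<And>m. measure M (K - C m) < (1 / 2) ^ Suc m"
    "\<And>m. continuous_on (C m) Q" "\<And>m. \<forall>x\<in>C m. \<bar>Q x\<bar> \<noteq> \<infinity>"
    by metis
  define Ks where "Ks m = (\<Union>i\<le>m. C i)" for m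
  have "incseq Ks"
    unfolding incseq_def Ks_def by (intro allI impI UN_mono) auto
  have Ks: "compact (Ks m)" "Ks m \<subseteq> K" "continuous_on (Ks m) Q" "\<forall>x\<in>Ks m. \<bar>Q x\<bar> \<noteq> \<infinity>" for m
    unfolding Ks_def using C
    by (auto intro!: compact_UN continuous_on_closed_Union compact_imp_closed)
  have [measurable]: "K \<in> events" "C m \<in> events" "Ks m \<in> events" for m
    using K C(1) Ks(1) sM by (auto intro: borel_compact)
  have "prob K = 1"
    using MK by (simp add: AE_in_set_eq_1)
  have small: "prob (K - Ks m) < (1 / 2) ^ Suc m" for m
    using finite_measure_mono[of "K - Ks m" "K - C m"] C(3)[of m] by (force simp: Ks_def)
  have "prob (Ks m) > 0" for m
  proof -
    have "(1 / 2 :: real) ^ Suc m \<le> 1 / 2"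
      by (simp add: power_le_one)
    then show ?thesis
      using small[of m] \<open>prob K = 1\<close> Ks(2)[of m] by (simp add: finite_measure_Diff)
  qed
  moreover have "AE x in M. x \<in> (\<Union>m. Ks m)"
  proof -
    have "prob (K - (\<Union>m. Ks m)) \<le> (1 / 2) ^ Suc m" for m
      by (intro order_trans[OF finite_measure_mono less_imp_le[OF small]]) auto
    then have "prob (K - (\<Union>m. Ks m)) \<le> 0"
      by (intro LIMSEQ_le_const[OF LIMSEQ_Suc[OF LIMSEQ_power_zero[of "1 / 2 :: real"]]]) auto
    then have "AE x in M. x \<notin> K - (\<Union>m. Ks m)"
      by (intro AE_not_in) (auto simp: measure_le_0_iff emeasure_eq_measure)
    then show ?thesis
      using MK by eventually_elim blast
  qed
  ultimately show ?thesis
    using \<open>incseq Ks\<close> Ks by (intro exI[of _ Ks]) simp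
qed

section \<open>Normalized restrictions along exhausting sequences\<close>

lemma eventually_mem_incseq:
  assumes "incseq A" "x \<in> (\<Union>m. A m)"
  shows "eventually (\<lambda>m. x \<in> A m) sequentially"
proof -
  obtain m0 where "x \<in> A m0" using assms(2) by blast
  then show ?thesis
    using assms(1) unfolding eventually_sequentially incseq_def by blast
qed

lemma nn_integral_LIMSEQ_AE:
  assumes mono: "\<And>x. incseq (\<lambda>m. F m x)" and meas: "\<And>m. F m \<in> borel_measurable M"
    and lim: "AE x in M. (\<lambda>m. F m x) \<longlonglongrightarrow> f x"
  shows "(\<lambda>m. integral\<^sup>N M (F m)) \<longlonglongrightarrow> integral\<^sup>N M f"
proof -
  have "incseq F"
    using mono by (auto simp: incseq_def le_fun_def)
  then have "(\<lambda>m. integral\<^sup>N M (F m)) \<longlonglongrightarrow> (SUP m. integral\<^sup>N M (F m))"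
    by (intro LIMSEQ_SUP incseq_nn_integral)
  also have "(SUP m. integral\<^sup>N M (F m)) = (\<integral>\<^sup>+ x. (SUP m. F m x) \<partial>M)"
    using \<open>incseq F\<close> meas by (rule nn_integral_monotone_convergence_SUP[symmetric])
  also have "\<dots> = integral\<^sup>N M f"
    using lim
    by (intro nn_integral_cong_AE, eventually_elim) (metis LIMSEQ_SUP LIMSEQ_unique mono)
  finally show ?thesis .
qed

lemma tendsto_nn_integral_indicator_incseq:
  assumes "incseq A" "\<And>m. A m \<in> sets M" "AE x in M. x \<in> (\<Union>m. A m)"
    and h: "h \<in> borel_measurable M"
  shows "(\<lambda>m. \<integral>\<^sup>+ x. indicator (A m) x * h x \<partial>M) \<longlonglongrightarrow> integral\<^sup>N M h"
proof (rule nn_integral_LIMSEQ_AE)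
  show "incseq (\<lambda>m. indicator (A m) x * h x)" for x
    using \<open>incseq A\<close> by (auto simp: incseq_def indicator_def subset_eq)
  show "(\<lambda>x. indicator (A m) x * h x) \<in> borel_measurable M" for m
    using assms(2) h by measurable
  show "AE x in M. (\<lambda>m. indicator (A m) x * h x) \<longlonglongrightarrow> h x"
    using assms(3)
  proof eventually_elim
    case (elim x)
    have "eventually (\<lambda>m. indicator (A m) x * h x = h x) sequentially"
      using eventually_mem_incseq[OF \<open>incseq A\<close> elim] by (rule eventually_mono) simp
    then show ?case by (rule tendsto_eventually)
  qed
qed

lemma (in prob_space) tendsto_measure_incseq_AE:
  assumes "incseq A" "\<And>m. A m \<in> events" "AE x in M. x \<in> (\<Union>m. A m)"
  shows "(\<lambda>m. prob (A m)) \<longlonglongrightarrow> 1"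
proof -
  have "(\<lambda>m. prob (A m)) \<longlonglongrightarrow> prob (\<Union>m. A m)"
    using assms(1,2) by (intro finite_Lim_measure_incseq) auto
  also have "prob (\<Union>m. A m) = 1"
    using assms(2,3) by (subst AE_in_set_eq_1[symmetric]) auto
  finally show ?thesis .
qed

text \<open>For \<open>measure M A = 0\<close> the density is \<open>0\<close>, as \<open>x / 0 = 0\<close>.\<close>
definition normalized_restriction :: "'a measure \<Rightarrow> 'a set \<Rightarrow> 'a measure" where
  "normalized_restriction M A = density M (\<lambda>x. ennreal (indicator A x / measure M A))"

lemma sets_normalized_restriction [simp, measurable_cong]:
  "sets (normalized_restriction M A) = sets M"
  by (simp add: normalized_restriction_def)

lemma space_normalized_restriction [simp]:
  "space (normalized_restriction M A) = space M"
  by (simp add: normalized_restriction_def)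

lemma nn_integral_normalized_restriction:
  assumes [measurable]: "A \<in> sets M" "h \<in> borel_measurable M"
  shows "integral\<^sup>N (normalized_restriction M A) h
           = ennreal (1 / measure M A) * (\<integral>\<^sup>+ x. indicator A x * h x \<partial>M)"
proof -
  have "integral\<^sup>N (normalized_restriction M A) h
          = (\<integral>\<^sup>+ x. ennreal (indicator A x / measure M A) * h x \<partial>M)"
    unfolding normalized_restriction_def by (rule nn_integral_density) measurable
  also have "\<dots> = (\<integral>\<^sup>+ x. ennreal (1 / measure M A) * (indicator A x * h x) \<partial>M)"
    by (intro nn_integral_cong) (simp add: indicator_def)
  also have "\<dots> = ennreal (1 / measure M A) * (\<integral>\<^sup>+ x. indicator A x * h x \<partial>M)"
    by (rule nn_integral_cmult) measurable
  finally show ?thesis .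
qed

lemma integral_normalized_restriction:
  fixes f :: "'a \<Rightarrow> real"
  assumes [measurable]: "A \<in> sets M" "f \<in> borel_measurable M"
  shows "integral\<^sup>L (normalized_restriction M A) f = 1 / measure M A * (\<integral>x. indicator A x * f x \<partial>M)"
proof -
  have "integral\<^sup>L (normalized_restriction M A) f = (\<integral>x. (indicator A x / measure M A) *\<^sub>R f x \<partial>M)"
    unfolding normalized_restriction_def by (rule integral_density) auto
  also have "\<dots> = (\<integral>x. 1 / measure M A * (indicator A x * f x) \<partial>M)"
    by simp
  also have "\<dots> = 1 / measure M A * (\<integral>x. indicator A x * f x \<partial>M)"
    by (rule integral_mult_right_zero)
  finally show ?thesis .
qed

lemma normalized_restriction_in_prob_measures_on:
  assumes sM: "sets M = sets borel" and fm: "finite_measure M"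
    and A: "A \<in> sets M" and pos: "measure M A > 0"
  shows "normalized_restriction M A \<in> prob_measures_on A"
proof -
  interpret finite_measure M by (rule fm)
  have emeasure_eq: "emeasure (normalized_restriction M A) B = 1" if "A \<subseteq> B" "B \<in> sets M" for B
  proof -
    have "emeasure (normalized_restriction M A) B = integral\<^sup>N (normalized_restriction M A) (indicator B)"
      using that by simp
    also have "\<dots> = ennreal (1 / measure M A) * (\<integral>\<^sup>+ x. indicator A x * indicator B x \<partial>M)"
      using that A by (intro nn_integral_normalized_restriction) auto
    also have "\<dots> = ennreal (1 / measure M A) * emeasure M A"
      using that A by (simp add: indicator_inter_arith[symmetric] Int_absorb2)
    also have "\<dots> = ennreal (1 / measure M A * measure M A)"
      using pos by (simp add: emeasure_eq_measure ennreal_mult[symmetric] del: ennreal_1)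
    also have "\<dots> = 1"
      using pos by simp
    finally show ?thesis .
  qed
  have "prob_space (normalized_restriction M A)"
    using emeasure_eq[of "space M"] A sets.sets_into_space by (intro prob_spaceI) auto
  then show ?thesis
    using emeasure_eq[of A] A sM by (simp add: prob_measures_on_def)
qed

context prob_space
begin

lemma tendsto_inverse_prob_incseq_AE:
  assumes "incseq A" "\<And>m. A m \<in> events" "AE x in M. x \<in> (\<Union>m. A m)"
  shows "(\<lambda>m. ennreal (1 / prob (A m))) \<longlonglongrightarrow> 1"
  using tendsto_ennrealI[OF tendsto_divide[OF tendsto_const[of "1::real"] tendsto_measure_incseq_AE[OF assms]]]
  by simp

lemma tendsto_nn_integral_normalized_restriction:
  assumes A: "incseq A" "\<And>m. A m \<in> events" "AE x in M. x \<in> (\<Union>m. A m)"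
    and h: "h \<in> borel_measurable M"
  shows "(\<lambda>m. integral\<^sup>N (normalized_restriction M (A m)) h) \<longlonglongrightarrow> integral\<^sup>N M h"
  using tendsto_mult_ennreal[OF tendsto_inverse_prob_incseq_AE[OF A]
      tendsto_nn_integral_indicator_incseq[OF A h]]
  by (simp add: nn_integral_normalized_restriction A(2) h)

lemma tendsto_integral_normalized_restriction:
  fixes f :: "'a \<Rightarrow> real"
  assumes A: "incseq A" "\<And>m. A m \<in> events" "AE x in M. x \<in> (\<Union>m. A m)"
    and f: "integrable M f"
  shows "(\<lambda>m. integral\<^sup>L (normalized_restriction M (A m)) f) \<longlonglongrightarrow> integral\<^sup>L M f"
proof -
  have [measurable]: "f \<in> borel_measurable M" "A m \<in> events" for m
    using f A(2) by auto
  have "(\<lambda>m. \<integral>x. indicator (A m) x * f x \<partial>M) \<longlonglongrightarrow> integral\<^sup>L M f"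
  proof (rule integral_dominated_convergence[where w="\<lambda>x. norm (f x)"])
    show "AE x in M. (\<lambda>m. indicator (A m) x * f x) \<longlonglongrightarrow> f x"
      using A(3)
    proof eventually_elim
      case (elim x)
      have "eventually (\<lambda>m. indicator (A m) x * f x = f x) sequentially"
        using eventually_mem_incseq[OF A(1) elim] by (rule eventually_mono) simp
      then show ?case
        by (rule tendsto_eventually)
    qed
  qed (use f in \<open>auto simp: indicator_def\<close>)
  then have "(\<lambda>m. 1 / prob (A m) * (\<integral>x. indicator (A m) x * f x \<partial>M)) \<longlonglongrightarrow> 1 / 1 * integral\<^sup>L M f"
    by (intro tendsto_mult tendsto_divide tendsto_const tendsto_measure_incseq_AE[OF A]) simp
  then show ?thesis
    by (simp add: integral_normalized_restriction)
qed

lemma tendsto_double_nn_integral_normalized_restriction: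
  assumes A: "incseq A" "\<And>m. A m \<in> events" "AE x in M. x \<in> (\<Union>m. A m)"
    and k [measurable]: "(\<lambda>(x, y). k x y) \<in> borel_measurable (M \<Otimes>\<^sub>M M)"
  shows "(\<lambda>m. \<integral>\<^sup>+ x. \<integral>\<^sup>+ y. k x y \<partial>normalized_restriction M (A m) \<partial>normalized_restriction M (A m))
           \<longlonglongrightarrow> (\<integral>\<^sup>+ x. \<integral>\<^sup>+ y. k x y \<partial>M \<partial>M)"
proof -
  have [measurable]: "A m \<in> events" for m
    by (rule A(2))
  have kx: "k x \<in> borel_measurable M" if "x \<in> space M" for x
    using measurable_Pair2[OF k that] by simp
  define I where "I m x = indicator (A m) x * (\<integral>\<^sup>+ y. indicator (A m) y * k x y \<partial>M)" for m x
  have I_meas [measurable]: "I m \<in> borel_measurable M" for m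
    unfolding I_def by measurable
  have eq: "(\<integral>\<^sup>+ x. \<integral>\<^sup>+ y. k x y \<partial>normalized_restriction M (A m) \<partial>normalized_restriction M (A m))
      = ennreal (1 / prob (A m)) * (ennreal (1 / prob (A m)) * integral\<^sup>N M (I m))" for m
  proof -
    let ?c = "ennreal (1 / prob (A m))"
    have "(\<integral>\<^sup>+ x. \<integral>\<^sup>+ y. k x y \<partial>normalized_restriction M (A m) \<partial>normalized_restriction M (A m))
        = (\<integral>\<^sup>+ x. ?c * (\<integral>\<^sup>+ y. indicator (A m) y * k x y \<partial>M) \<partial>normalized_restriction M (A m))"
      by (intro nn_integral_cong) (simp add: nn_integral_normalized_restriction kx)
    also have "\<dots> = ?c * (\<integral>\<^sup>+ x. ?c * I m x \<partial>M)"
      by (subst nn_integral_normalized_restriction) (simp_all add: I_def mult.left_commute)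
    also have "\<dots> = ?c * (?c * integral\<^sup>N M (I m))"
      by (simp add: nn_integral_cmult)
    finally show ?thesis .
  qed
  have "(\<lambda>m. integral\<^sup>N M (I m)) \<longlonglongrightarrow> (\<integral>\<^sup>+ x. \<integral>\<^sup>+ y. k x y \<partial>M \<partial>M)"
  proof (rule nn_integral_LIMSEQ_AE)
    show "incseq (\<lambda>m. I m x)" for x
      using A(1) unfolding I_def incseq_def
      by (auto intro!: mult_mono nn_integral_mono simp: indicator_def subset_eq)
    show "I m \<in> borel_measurable M" for m
      by (rule I_meas)
    show "AE x in M. (\<lambda>m. I m x) \<longlonglongrightarrow> (\<integral>\<^sup>+ y. k x y \<partial>M)"
      using A(3) AE_space
    proof eventually_elim
      case (elim x)
      have "eventually (\<lambda>m. (\<integral>\<^sup>+ y. indicator (A m) y * k x y \<partial>M) = I m x) sequentially"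
        using eventually_mem_incseq[OF A(1) elim(1)] by (rule eventually_mono) (simp add: I_def)
      then show ?case
        using tendsto_nn_integral_indicator_incseq[OF A kx[OF elim(2)]] by (rule Lim_transform_eventually[rotated])
    qed
  qed
  then have "(\<lambda>m. ennreal (1 / prob (A m)) * (ennreal (1 / prob (A m)) * integral\<^sup>N M (I m)))
      \<longlonglongrightarrow> 1 * (1 * (\<integral>\<^sup>+ x. \<integral>\<^sup>+ y. k x y \<partial>M \<partial>M))"
    using tendsto_inverse_prob_incseq_AE[OF A] by (intro tendsto_mult_ennreal) auto
  then show ?thesis
    unfolding eq by simp
qed

end

lemma weak_conv_to_normalized_restriction:
  fixes M :: "'a::topological_space measure"
  assumes "prob_space M" and sM: "sets M = sets borel"
    and A: "incseq A" "\<And>m. A m \<in> sets M" "AE x in M. x \<in> (\<Union>m. A m)"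
  shows "weak_conv_to (\<lambda>m. normalized_restriction M (A m)) M"
  unfolding weak_conv_to_def
proof (intro allI impI prob_space.tendsto_integral_normalized_restriction[OF \<open>prob_space M\<close> A])
  interpret prob_space M by fact
  fix f :: "'a \<Rightarrow> real" assume f: "continuous_on UNIV f \<and> bounded (range f)"
  then obtain B where "\<And>x. norm (f x) \<le> B" unfolding bounded_iff by blast
  moreover have "f \<in> borel_measurable M"
    using f by (simp add: measurable_cong_sets[OF sM refl] borel_measurable_continuous_onI)
  ultimately show "integrable M f"
    by (intro integrable_const_bound[where B=B]) auto
qed

section \<open>The \<open>Q\<close>-integral and the logarithmic energy\<close>

lemma tendsto_ext_integral:
  assumes "(\<lambda>m. \<integral>\<^sup>+ x. e2ennreal (f x) \<partial>Ms m) \<longlonglongrightarrow> (\<integral>\<^sup>+ x. e2ennreal (f x) \<partial>M)"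
    and "(\<lambda>m. \<integral>\<^sup>+ x. e2ennreal (- f x) \<partial>Ms m) \<longlonglongrightarrow> (\<integral>\<^sup>+ x. e2ennreal (- f x) \<partial>M)"
    and "(\<integral>\<^sup>+ x. e2ennreal (- f x) \<partial>M) \<noteq> top"
  shows "(\<lambda>m. ext_integral (Ms m) f) \<longlonglongrightarrow> ext_integral M f"
  unfolding ext_integral_def
  using assms by (intro tendsto_diff_ereal_general tendsto_enn2erealI) auto

lemma tendsto_log_energy:
  assumes "(\<lambda>m. \<integral>\<^sup>+ x. \<integral>\<^sup>+ y. log_kernel_pos x y \<partial>Ms m \<partial>Ms m) \<longlonglongrightarrow> (\<integral>\<^sup>+ x. \<integral>\<^sup>+ y. log_kernel_pos x y \<partial>M \<partial>M)"
    and "(\<lambda>m. \<integral>\<^sup>+ x. \<integral>\<^sup>+ y. log_kernel_neg x y \<partial>Ms m \<partial>Ms m) \<longlonglongrightarrow> (\<integral>\<^sup>+ x. \<integral>\<^sup>+ y. log_kernel_neg x y \<partial>M \<partial>M)"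
    and "(\<integral>\<^sup>+ x. \<integral>\<^sup>+ y. log_kernel_neg x y \<partial>M \<partial>M) \<noteq> top"
  shows "(\<lambda>m. log_energy (Ms m)) \<longlonglongrightarrow> log_energy M"
  unfolding log_energy_def
  using assms by (intro tendsto_diff_ereal_general tendsto_enn2erealI) auto

lemma nn_integral_neg_part_finite_if_bounded_below:
  fixes f :: "'a \<Rightarrow> ereal"
  assumes "finite_measure M" and b: "\<And>x. x \<in> space M \<Longrightarrow> - ereal b \<le> f x"
  shows "(\<integral>\<^sup>+ x. e2ennreal (- f x) \<partial>M) \<noteq> top"
proof -
  interpret finite_measure M by fact
  have le: "(\<integral>\<^sup>+ x. e2ennreal (- f x) \<partial>M) \<le> (\<integral>\<^sup>+ x. e2ennreal (ereal b) \<partial>M)"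
    using b by (intro nn_integral_mono e2ennreal_mono) (simp add: ereal_uminus_le_reorder)
  have fin: "(\<integral>\<^sup>+ x. e2ennreal (ereal b) \<partial>M) \<noteq> top"
    by (simp add: e2ennreal_ereal ennreal_mult_eq_top_iff)
  show ?thesis
    by (rule neq_top_trans[OF fin le])
qed

lemma log_kernel_pos_borel_measurable [measurable]:
  "(\<lambda>(x, y). log_kernel_pos x y) \<in> borel_measurable (borel \<Otimes>\<^sub>M (borel :: 'a::euclidean_space measure))"
  unfolding log_kernel_pos_def case_prod_beta' by measurable

lemma log_kernel_neg_borel_measurable [measurable]:
  "(\<lambda>(x, y). log_kernel_neg x y) \<in> borel_measurable (borel \<Otimes>\<^sub>M (borel :: 'a::euclidean_space measure))"
  unfolding log_kernel_neg_def case_prod_beta' by measurable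

lemma log_kernel_neg_le_dist: "log_kernel_neg x y \<le> ennreal (dist x y)"
proof (cases "x = y")
  case False
  then have "ln (dist x y) \<le> dist x y - 1"
    by (intro ln_le_minus_one) simp
  then show ?thesis
    using False by (simp add: log_kernel_neg_def ennreal_leI)
qed (simp add: log_kernel_neg_def)

lemma nn_integral_log_kernel_neg_finite:
  assumes "finite_measure M" "bounded K" "AE x in M. x \<in> K"
  shows "(\<integral>\<^sup>+ x. \<integral>\<^sup>+ y. log_kernel_neg x y \<partial>M \<partial>M) \<noteq> top"
proof -
  interpret finite_measure M by fact
  obtain d where d: "\<And>x y. x \<in> K \<Longrightarrow> y \<in> K \<Longrightarrow> dist x y \<le> d"
    using \<open>bounded K\<close> unfolding bounded_two_points by blast
  have le: "(\<integral>\<^sup>+ x. \<integral>\<^sup>+ y. log_kernel_neg x y \<partial>M \<partial>M) \<le> (\<integral>\<^sup>+ x. \<integral>\<^sup>+ y. ennreal d \<partial>M \<partial>M)"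
  proof (intro nn_integral_mono_AE)
    show "AE x in M. (\<integral>\<^sup>+ y. log_kernel_neg x y \<partial>M) \<le> (\<integral>\<^sup>+ y. ennreal d \<partial>M)"
      using assms(3)
    proof eventually_elim
      case (elim x)
      show ?case
        using assms(3) by (intro nn_integral_mono_AE, eventually_elim)
          (meson d elim ennreal_leI log_kernel_neg_le_dist order_trans)
    qed
  qed
  have fin: "(\<integral>\<^sup>+ x. \<integral>\<^sup>+ y. ennreal d \<partial>M \<partial>M) \<noteq> top"
    by (simp add: ennreal_mult_eq_top_iff)
  show ?thesis
    by (rule neq_top_trans[OF fin le])
qed

lemma (in prob_space) tendsto_ext_integral_normalized_restriction:
  assumes A: "incseq A" "\<And>m. A m \<in> events" "AE x in M. x \<in> (\<Union>m. A m)"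
    and f: "f \<in> borel_measurable M" and b: "\<And>x. x \<in> space M \<Longrightarrow> - ereal b \<le> f x"
  shows "(\<lambda>m. ext_integral (normalized_restriction M (A m)) f) \<longlonglongrightarrow> ext_integral M f"
  using f by (intro tendsto_ext_integral tendsto_nn_integral_normalized_restriction[OF A]
      nn_integral_neg_part_finite_if_bounded_below[OF finite_measure_axioms b]) auto

lemma tendsto_log_energy_normalized_restriction:
  fixes M :: "'a::euclidean_space measure"
  assumes "prob_space M" and sM: "sets M = sets borel" and K: "bounded K" "AE x in M. x \<in> K"
    and A: "incseq A" "\<And>m. A m \<in> sets M" "AE x in M. x \<in> (\<Union>m. A m)"
  shows "(\<lambda>m. log_energy (normalized_restriction M (A m))) \<longlonglongrightarrow> log_energy M"
proof -
  interpret prob_space M by fact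
  have [measurable]: "(\<lambda>(x, y). log_kernel_pos x y) \<in> borel_measurable (M \<Otimes>\<^sub>M M)"
    "(\<lambda>(x, y). log_kernel_neg x y) \<in> borel_measurable (M \<Otimes>\<^sub>M M)"
    by (simp_all add: measurable_cong_sets[OF sets_pair_measure_cong[OF sM sM] refl])
  show ?thesis
    by (intro tendsto_log_energy tendsto_double_nn_integral_normalized_restriction[OF A]
        nn_integral_log_kernel_neg_finite[OF finite_measure_axioms K]) measurable
qed

theorem lemma5p2:
  fixes K :: "'a::euclidean_space set" and \<mu> :: "'a measure" and Q :: "'a \<Rightarrow> ereal"
  assumes "DIM('a) \<ge> 2"
    and "compact K" and "\<not> log_polar K"
    and "\<mu> \<in> prob_measures_on K" and "log_energy \<mu> < \<infinity>"
    and "admissible K Q"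
    and "AE x in \<mu>. Q x < \<infinity>"
  shows "\<exists>Ks :: nat \<Rightarrow> 'a set. \<exists>\<mu>s :: nat \<Rightarrow> 'a measure.
           incseq Ks \<and> (\<forall>m. compact (Ks m) \<and> Ks m \<subseteq> K \<and> \<mu>s m \<in> prob_measures_on (Ks m))
         \<and> weak_conv_to \<mu>s \<mu>
         \<and> (\<forall>m. continuous_on (Ks m) Q \<and> (\<forall>x \<in> Ks m. \<bar>Q x\<bar> \<noteq> \<infinity>))
         \<and> (\<lambda>m. ext_integral (\<mu>s m) (\<lambda>x. if x \<in> K then Q x else 0))
             \<longlonglongrightarrow> ext_integral \<mu> (\<lambda>x. if x \<in> K then Q x else 0)
         \<and> (\<lambda>m. log_energy (\<mu>s m)) \<longlonglongrightarrow> log_energy \<mu>"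
proof -
  interpret prob_space \<mu>
    using assms(4) by (simp add: prob_measures_on_def)
  have sM: "sets \<mu> = sets borel"
    using assms(4) unfolding prob_measures_on_def by blast
  have K: "compact K" and lsc: "lsc_on K Q" and ninf: "\<forall>x\<in>K. Q x \<noteq> -\<infinity>"
    using assms(2,6) unfolding admissible_def by blast+
  have "K \<in> events" "prob K = 1"
    using K sM assms(4) by (simp_all add: borel_compact prob_measures_on_def emeasure_eq_measure)
  then have K_AE: "AE x in \<mu>. x \<in> K"
    by (simp add: AE_in_set_eq_1)
  obtain Ks where Ks: "incseq Ks" "AE x in \<mu>. x \<in> (\<Union>m. Ks m)"
    and Ks_m: "\<And>m. compact (Ks m) \<and> Ks m \<subseteq> K \<and> continuous_on (Ks m) Q
                    \<and> (\<forall>x\<in>Ks m. \<bar>Q x\<bar> \<noteq> \<infinity>) \<and> prob (Ks m) > 0"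
    using lsc_on_lusin_incseq[OF sM prob_space_axioms K K_AE lsc ninf assms(7)] by blast
  have Ks_events: "Ks m \<in> events" for m
    using Ks_m[of m] sM by (simp add: borel_compact)
  note Ks_lim = Ks(1) Ks_events Ks(2)
  obtain b where "b \<ge> 0" "\<forall>x\<in>K. - ereal b \<le> Q x"
    using lsc_on_compact_bounded_below[OF K lsc ninf] by blast
  then have Q_bound: "- ereal b \<le> (if x \<in> K then Q x else 0)" for x
    by simp
  have Q_meas: "(\<lambda>x. if x \<in> K then Q x else 0) \<in> borel_measurable \<mu>"
    using lsc_on_borel_measurable[OF lsc compact_imp_closed[OF K]] by (simp add: measurable_cong_sets[OF sM refl])
  show ?thesis
    using Ks_m Ks(1) normalized_restriction_in_prob_measures_on[OF sM finite_measure_axioms Ks_events]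
      weak_conv_to_normalized_restriction[OF prob_space_axioms sM Ks_lim]
      tendsto_ext_integral_normalized_restriction[OF Ks_lim Q_meas Q_bound]
      tendsto_log_energy_normalized_restriction[OF prob_space_axioms sM compact_imp_bounded[OF K] K_AE Ks_lim]
    by (intro exI[of _ Ks] exI[of _ "\<lambda>m. normalized_restriction \<mu> (Ks m)"]) simp
qed

end
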